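(* Let $n\ge2$, $1<p<n$ and $q\ge\frac{2n}{n-1}$. Let $u\in C_0^\infty(\mathbb H^n)$, $f=-\Delta_g u$, and \[ v(t)=\int_t^\infty\frac{s\,f^{**}(s)}{\big(n\sigma_n\sinh^{n-1}(F(s))\big)^2}\,ds,\quad t>0. \] Then \[ \int_0^\infty|v'(t)|^q\big(n\sigma_n\sinh^{n-1}(F(t))\big)^q t^{\frac qp-1}dt\ \ge\ \left(\frac{n-1}{p}\right)^q\int_0^\infty|v(t)|^qt^{\frac qp-1}dt+n^q\sigma_n^{q/n}\int_0^\infty|v'(t)|^qt^{q(\frac1p-\frac1n)+q-1}dt, \] and \begin{align*} \int_0^\infty|v'(t)|^q\big(n\sigma_n\sinh^{n-1}(F(t))\big)^q t^{q(\frac1p-\frac1n)-1}dt\ \ge\ &\left(\frac{(n-1)(n-p)}{np}\right)^q\int_0^\infty|v(t)|^qt^{q(\frac1p-\frac1n)-1}dt\\ &+n^q\sigma_n^{q/n}\int_0^\infty|v'(t)|^qt^{q(\frac1p-\frac2n)+q-1}dt. \end{align*}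
   Context: $\mathbb H^n$ is the hyperbolic space (Poincaré ball model: unit ball $B_n\subset\mathbb R^n$ with metric $g=\left(\frac{2}{1-|x|^2}\right)^2dx\otimes dx$, volume element $dV_g=\left(\frac{2}{1-|x|^2}\right)^ndx$), $\Delta_g$ its Laplace–Beltrami operator. $\sigma_n$ is the Lebesgue volume of the Euclidean unit ball in $\mathbb R^n$. For $r\ge0$, $F(r)$ is the unique $\rho\ge0$ with $r=n\sigma_n\int_0^\rho\sinh^{n-1}(s)\,ds$. For measurable $h$ on $\mathbb H^n$ with $V_g(\{|h|>t\})<\infty$ for all $t>0$: $h^*(t)=\sup\{s>0:V_g(\{|h|>s\})>t\}$ and $h^{**}(t)=\frac1t\int_0^t h^*(s)\,ds$. *)

theory Defs
  imports "HOL-Analysis.Analysis"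
begin

fun iter_partial :: "'a::euclidean_space list \<Rightarrow> ('a \<Rightarrow> real) \<Rightarrow> 'a \<Rightarrow> real" where
  "iter_partial [] f = f"
| "iter_partial (v # vs) f = (\<lambda>x. frechet_derivative (iter_partial vs f) (at x) v)"

definition smooth_on :: "'a::euclidean_space set \<Rightarrow> ('a \<Rightarrow> real) \<Rightarrow> bool" where
  "smooth_on S f \<longleftrightarrow> (\<forall>vs. set vs \<subseteq> Basis \<longrightarrow> iter_partial vs f differentiable_on S)"

text \<open>Poincare ball model: the open unit ball.\<close>
abbreviation hball :: "'a::euclidean_space set" where
  "hball \<equiv> ball 0 1"

definition Cc_infty_hyp :: "('a::euclidean_space \<Rightarrow> real) \<Rightarrow> bool" where
  "Cc_infty_hyp u \<longleftrightarrow> smooth_on hball u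
     \<and> compact (closure {x. u x \<noteq> 0}) \<and> closure {x. u x \<noteq> 0} \<subseteq> hball"

definition eucl_laplacian :: "('a::euclidean_space \<Rightarrow> real) \<Rightarrow> 'a \<Rightarrow> real" where
  "eucl_laplacian u x = (\<Sum>i\<in>Basis. iter_partial [i, i] u x)"

text \<open>Laplace-Beltrami operator of g = (2/(1-|x|^2))^2 dx^2 on the ball, written out:
  Delta_g u = ((1-|x|^2)/2)^2 Delta u + (n-2) (1-|x|^2)/2 <x, grad u>; set to 0 off the ball.\<close>
definition hyp_laplacian :: "('a::euclidean_space \<Rightarrow> real) \<Rightarrow> 'a \<Rightarrow> real" where
  "hyp_laplacian u x =
    (if x \<in> hball then
       ((1 - (norm x)\<^sup>2) / 2)\<^sup>2 * eucl_laplacian u x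
       + (real DIM('a) - 2) * ((1 - (norm x)\<^sup>2) / 2) * (\<Sum>i\<in>Basis. (x \<bullet> i) * iter_partial [i] u x)
     else 0)"

definition hyp_volume :: "'a::euclidean_space measure" where
  "hyp_volume = density lborel
     (\<lambda>x. indicator hball x * ennreal ((2 / (1 - (norm x)\<^sup>2)) ^ DIM('a)))"

definition sigma_n :: "'a::euclidean_space itself \<Rightarrow> real" where
  "sigma_n _ = measure lborel (ball (0::'a) 1)"

definition hypF :: "'a::euclidean_space itself \<Rightarrow> real \<Rightarrow> real" where
  "hypF T r = (THE \<rho>. \<rho> \<ge> 0 \<and>
      r = real DIM('a) * sigma_n T * integral {0..\<rho>} (\<lambda>s. sinh s ^ (DIM('a) - 1)))"

definition rearr :: "('a::euclidean_space \<Rightarrow> real) \<Rightarrow> real \<Rightarrow> real" where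
  "rearr h t = (let S = {s. s > 0 \<and> emeasure hyp_volume {x. \<bar>h x\<bar> > s} > ennreal t}
                in if S = {} then 0 else Sup S)"

definition rearr2 :: "('a::euclidean_space \<Rightarrow> real) \<Rightarrow> real \<Rightarrow> real" where
  "rearr2 h t = (1 / t) * integral {0..t} (rearr h)"

end

theory Submission
  imports Defs
begin

text \<open>
  Write \<open>g(s) = s f**(s) / w(s)^2\<close>, where \<open>w(s) = n \<sigma>\<^sub>n sinh(F(s))^(n-1)\<close> is the area of the
  boundary of the geodesic ball of volume \<open>s\<close>; then \<open>v\<close> is the tail integral of \<open>g\<close> and
  \<open>-v' = g\<close>. Hardy's inequality gives \<open>\<integral> |v|^q t^a \<le> (q/(a+1))^q \<integral> g^q t^(a+q)\<close> for
  \<open>a > -1\<close>, and the isoperimetric inequality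
  \<open>((n-1) t)^q + n^q \<sigma>\<^sub>n^(q/n) t^(q(n-1)/n) \<le> w(t)^q\<close>, multiplied by \<open>g(t)^q t^a\<close> and
  integrated, yields both estimates (\<open>a = q/p - 1\<close> and \<open>a = q(1/p - 1/n) - 1\<close>).
  With \<open>\<Phi>(\<rho>) = \<integral>\<^sub>0\<^sup>\<rho> sinh^(n-1)\<close>, the isoperimetric inequality follows from
  \<open>((n-1)\<Phi>)^(2n/(n-1)) + (n\<Phi>)^2 \<le> sinh^(2n)\<close> and superadditivity of \<open>x \<mapsto> x^r\<close> for
  \<open>r \<ge> 1\<close>; this inequality and the two it rests on are proved by comparing derivatives in \<open>\<rho>\<close>.
\<close>

section \<open>Hoelder and Hardy inequalities\<close>

lemma Youngs_inequality_rescaled: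
  fixes q r x y a b :: real
  assumes "q > 1" "r > 1" "1/q + 1/r = 1" "x \<ge> 0" "y \<ge> 0" "a > 0" "b > 0"
  shows "x * y \<le> a * b * (x powr q / (q * a powr q) + y powr r / (r * b powr r))"
proof -
  have "(x / a) * (y / b) \<le> (x / a) powr q / q + (y / b) powr r / r"
    by (rule Youngs_inequality) (use assms in auto)
  then have "a * b * ((x / a) * (y / b)) \<le> a * b * ((x / a) powr q / q + (y / b) powr r / r)"
    using assms by (intro mult_left_mono) auto
  then show ?thesis
    using assms by (simp add: powr_divide field_simps)
qed

lemma nn_integral_mult_le_Hoelder:
  fixes M :: "'b measure" and f h :: "'b \<Rightarrow> real" and q r A B :: real
  assumes q: "q > 1" and r: "r > 1" "1/q + 1/r = 1"
    and [measurable]: "f \<in> borel_measurable M" "h \<in> borel_measurable M"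
    and f_nonneg: "\<And>x. f x \<ge> 0" and h_nonneg: "\<And>x. h x \<ge> 0"
    and A: "(\<integral>\<^sup>+x. ennreal (f x powr q) \<partial>M) = ennreal A" "A > 0"
    and B: "(\<integral>\<^sup>+x. ennreal (h x powr r) \<partial>M) = ennreal B" "B > 0"
  shows "(\<integral>\<^sup>+x. ennreal (f x * h x) \<partial>M) \<le> ennreal (A powr (1/q) * B powr (1/r))"
proof -
  define a where "a = A powr (1/q)"
  define b where "b = B powr (1/r)"
  have ab: "a > 0" "b > 0" "a powr q = A" "b powr r = B"
    using A B q r by (auto simp: a_def b_def powr_powr)
  have "(\<integral>\<^sup>+x. ennreal (f x * h x) \<partial>M)
      \<le> (\<integral>\<^sup>+x. ennreal (a * b / (q * A)) * ennreal (f x powr q)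
                + ennreal (a * b / (r * B)) * ennreal (h x powr r) \<partial>M)"
  proof (rule nn_integral_mono)
    fix x
    have "f x * h x \<le> a * b / (q * A) * f x powr q + a * b / (r * B) * h x powr r"
      using Youngs_inequality_rescaled[OF q r f_nonneg h_nonneg ab(1,2)] ab
      by (simp add: field_simps)
    then show "ennreal (f x * h x) \<le> ennreal (a * b / (q * A)) * ennreal (f x powr q)
                + ennreal (a * b / (r * B)) * ennreal (h x powr r)"
      using ab q r A B
      by (simp add: ennreal_mult[symmetric] ennreal_plus[symmetric] del: ennreal_plus)
  qed
  also have "\<dots> = ennreal (a * b / (q * A)) * ennreal A + ennreal (a * b / (r * B)) * ennreal B"
    by (subst nn_integral_add) (auto simp: nn_integral_cmult A B)
  also have "\<dots> = ennreal (a * b)"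
    using ab A B q r
    by (simp add: ennreal_mult[symmetric] ennreal_plus[symmetric] field_simps del: ennreal_plus)
  finally show ?thesis by (simp add: a_def b_def)
qed

lemma Hoelder_inequality_nn_integral:
  fixes M :: "'b measure" and f h :: "'b \<Rightarrow> real" and q B c :: real
  assumes q: "q > 1"
    and [measurable]: "f \<in> borel_measurable M" "h \<in> borel_measurable M"
    and f_nonneg: "\<And>x. f x \<ge> 0" and h_nonneg: "\<And>x. h x \<ge> 0"
    and B: "(\<integral>\<^sup>+x. ennreal (h x powr (q/(q-1))) \<partial>M) = ennreal B" and B_pos: "B > 0"
    and c: "ennreal c \<le> (\<integral>\<^sup>+x. ennreal (f x * h x) \<partial>M)" and c_nonneg: "c \<ge> 0"
  shows "ennreal (c powr q) \<le> (\<integral>\<^sup>+x. ennreal (f x powr q) \<partial>M) * ennreal (B powr (q-1))"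
proof (cases "(\<integral>\<^sup>+x. ennreal (f x powr q) \<partial>M) = \<infinity>")
  case True
  then show ?thesis using B_pos by (simp add: ennreal_mult_top)
next
  case False
  then obtain A where A: "(\<integral>\<^sup>+x. ennreal (f x powr q) \<partial>M) = ennreal A" "A \<ge> 0"
    by (cases "(\<integral>\<^sup>+x. ennreal (f x powr q) \<partial>M)") auto
  show ?thesis
  proof (cases "A = 0")
    case True
    then have "AE x in M. ennreal (f x * h x) = 0"
      using A f_nonneg by (auto simp: nn_integral_0_iff_AE elim!: eventually_mono)
    then have "c = 0" using c c_nonneg by (simp add: nn_integral_0_iff_AE[symmetric])
    then show ?thesis using q by simp
  next
    case False
    define r where "r = q/(q-1)"
    have r: "r > 1" "1/q + 1/r = 1" using q by (simp_all add: r_def field_simps)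
    have "ennreal c \<le> ennreal (A powr (1/q) * B powr (1/r))"
      using False A(2)
      by (intro order_trans[OF c nn_integral_mult_le_Hoelder[OF q r _ _ f_nonneg h_nonneg A(1) _
            B[folded r_def] B_pos]]) auto
    then have "c \<le> A powr (1/q) * B powr (1/r)"
      by (simp add: ennreal_le_iff)
    then have "c powr q \<le> (A powr (1/q) * B powr (1/r)) powr q"
      using c_nonneg q by (intro powr_mono2) auto
    also have "\<dots> = A * B powr (q - 1)"
      using A(2) B_pos q by (simp add: powr_mult powr_powr r_def)
    finally show ?thesis using A B_pos by (simp add: ennreal_mult[symmetric])
  qed
qed

lemma nn_integral_powr_Ici:
  fixes t k :: real
  assumes "t > 0" "k > 0"
  shows "(\<integral>\<^sup>+s. ennreal (indicator {t..} s * s powr (-(k+1))) \<partial>lborel) = ennreal (t powr (-k) / k)"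
proof -
  have "((\<lambda>s. s powr (-(k+1))) has_integral -(t powr (-(k+1)+1)) / (-(k+1)+1)) {t..}"
    by (rule has_integral_powr_to_inf) (use assms in auto)
  then have "((\<lambda>s. s powr (-(k+1))) has_integral t powr (-k) / k) {t..}"
    using assms by (simp add: field_simps)
  then show ?thesis by (intro nn_integral_has_integral_lebesgue) auto
qed

lemma nn_integral_powr_Ioc_0:
  fixes s e :: real
  assumes "s > 0" "e > -1"
  shows "(\<integral>\<^sup>+t. ennreal (indicator {0<..s} t * t powr e) \<partial>lborel) = ennreal (s powr (e+1) / (e+1))"
proof -
  have "indicator {0<..s} t * t powr e = indicator {0..s} t * t powr e" for t :: real
    by (cases "t = 0") (auto simp: indicator_def)
  then show ?thesis
    using has_integral_powr_from_0[of e s] assms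
    by (simp only:) (intro nn_integral_has_integral_lebesgue, auto)
qed

lemma nn_integral_Ioi_Ici_swap:
  fixes k h :: "real \<Rightarrow> ennreal"
  assumes [measurable]: "k \<in> borel_measurable borel" "h \<in> borel_measurable borel"
  shows "(\<integral>\<^sup>+t\<in>{0<..}. k t * (\<integral>\<^sup>+s\<in>{t..}. h s \<partial>lborel) \<partial>lborel)
       = (\<integral>\<^sup>+s\<in>{0<..}. h s * (\<integral>\<^sup>+t\<in>{0<..s}. k t \<partial>lborel) \<partial>lborel)"
proof -
  define H where "H = (\<lambda>(t, s). indicator {0<..} t * of_bool (t \<le> s) * (k t * h s) :: ennreal)"
  have [measurable]: "H \<in> borel_measurable (lborel \<Otimes>\<^sub>M lborel)"
    unfolding H_def by measurable
  have "(\<integral>\<^sup>+t\<in>{0<..}. k t * (\<integral>\<^sup>+s\<in>{t..}. h s \<partial>lborel) \<partial>lborel) = (\<integral>\<^sup>+t. \<integral>\<^sup>+s. H (t, s) \<partial>lborel \<partial>lborel)"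
    by (auto intro!: nn_integral_cong simp: H_def indicator_def nn_integral_cmult[symmetric] mult_ac)
  also have "\<dots> = (\<integral>\<^sup>+s. \<integral>\<^sup>+t. H (t, s) \<partial>lborel \<partial>lborel)"
    by (rule lborel_pair.Fubini') measurable
  also have "\<dots> = (\<integral>\<^sup>+s\<in>{0<..}. h s * (\<integral>\<^sup>+t\<in>{0<..s}. k t \<partial>lborel) \<partial>lborel)"
    by (auto intro!: nn_integral_cong simp: H_def indicator_def nn_integral_cmult[symmetric] mult_ac)
  finally show ?thesis .
qed

lemma nn_integral_lincomb_le:
  fixes X Y Z :: "'b \<Rightarrow> real" and \<alpha> \<beta> :: real
  assumes [measurable]: "X \<in> borel_measurable M" "Y \<in> borel_measurable M" "A \<in> sets M"
    and \<alpha>: "\<alpha> \<ge> 0" and \<beta>: "\<beta> \<ge> 0" and X: "\<And>x. x \<in> A \<Longrightarrow> X x \<ge> 0" and Y: "\<And>x. x \<in> A \<Longrightarrow> Y x \<ge> 0"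
    and le: "\<And>x. x \<in> A \<Longrightarrow> \<alpha> * X x + \<beta> * Y x \<le> Z x"
  shows "ennreal \<alpha> * (\<integral>\<^sup>+x\<in>A. ennreal (X x) \<partial>M) + ennreal \<beta> * (\<integral>\<^sup>+x\<in>A. ennreal (Y x) \<partial>M)
     \<le> (\<integral>\<^sup>+x\<in>A. ennreal (Z x) \<partial>M)"
proof -
  have "ennreal \<alpha> * (\<integral>\<^sup>+x\<in>A. ennreal (X x) \<partial>M) + ennreal \<beta> * (\<integral>\<^sup>+x\<in>A. ennreal (Y x) \<partial>M)
      = (\<integral>\<^sup>+x. ennreal \<alpha> * (ennreal (X x) * indicator A x) + ennreal \<beta> * (ennreal (Y x) * indicator A x) \<partial>M)"
    by (subst nn_integral_add) (auto simp: nn_integral_cmult)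
  also have "\<dots> \<le> (\<integral>\<^sup>+x\<in>A. ennreal (Z x) \<partial>M)"
  proof (intro nn_integral_mono)
    fix x
    show "ennreal \<alpha> * (ennreal (X x) * indicator A x) + ennreal \<beta> * (ennreal (Y x) * indicator A x)
        \<le> ennreal (Z x) * indicator A x"
    proof (cases "x \<in> A")
      case True
      then have "ennreal \<alpha> * ennreal (X x) + ennreal \<beta> * ennreal (Y x) = ennreal (\<alpha> * X x + \<beta> * Y x)"
        using \<alpha> \<beta> X Y by (simp add: ennreal_mult)
      also have "\<dots> \<le> ennreal (Z x)" using le[OF True] by (rule ennreal_leI)
      finally show ?thesis using True by simp
    qed simp
  qed
  finally show ?thesis .
qed

lemma tail_integral_Hoelder_bound:
  fixes g :: "real \<Rightarrow> real" and q \<gamma> t c :: real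
  assumes q: "q > 1" and \<gamma>: "\<gamma> > 0" and t: "t > 0"
    and [measurable]: "g \<in> borel_measurable borel" and g_nonneg: "\<And>s. g s \<ge> 0"
    and c: "ennreal c \<le> (\<integral>\<^sup>+s\<in>{t<..}. ennreal (g s) \<partial>lborel)" and c_nonneg: "c \<ge> 0"
  shows "ennreal (c powr q)
    \<le> ennreal ((t powr (-\<gamma>) / \<gamma>) powr (q-1))
       * (\<integral>\<^sup>+s\<in>{t..}. ennreal (g s powr q * s powr ((\<gamma>+1) * (q-1))) \<partial>lborel)"
proof -
  define \<beta> where "\<beta> = (\<gamma>+1) * (q-1) / q"
  define f where "f s = indicator {t..} s * g s * s powr \<beta>" for s
  define h where "h s = indicator {t..} s * s powr (-\<beta>)" for s :: real
  have [measurable]: "f \<in> borel_measurable lborel" "h \<in> borel_measurable lborel"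
    unfolding f_def h_def by measurable
  have h_powr: "h s powr (q/(q-1)) = indicator {t..} s * s powr (-(\<gamma>+1))" for s
    using t q by (cases "t \<le> s") (auto simp: h_def powr_powr \<beta>_def)
  have f_powr: "f s powr q = indicator {t..} s * (g s powr q * s powr ((\<gamma>+1) * (q-1)))" for s
    using t q g_nonneg[of s] by (cases "t \<le> s") (auto simp: f_def powr_mult powr_powr \<beta>_def)
  have "f s * h s = indicator {t..} s * g s" for s
    using t by (auto simp: f_def h_def indicator_def powr_minus field_simps)
  then have "(\<integral>\<^sup>+s\<in>{t<..}. ennreal (g s) \<partial>lborel) \<le> (\<integral>\<^sup>+s. ennreal (f s * h s) \<partial>lborel)"
    by (intro nn_integral_mono) (auto simp: indicator_def)
  with c have c_fh: "ennreal c \<le> (\<integral>\<^sup>+s. ennreal (f s * h s) \<partial>lborel)"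
    by (rule order_trans)
  have "ennreal (c powr q)
      \<le> (\<integral>\<^sup>+s. ennreal (f s powr q) \<partial>lborel) * ennreal ((t powr (-\<gamma>) / \<gamma>) powr (q-1))"
  proof (rule Hoelder_inequality_nn_integral[OF q _ _ _ _ _ _ c_fh])
    show "(\<integral>\<^sup>+s. ennreal (h s powr (q/(q-1))) \<partial>lborel) = ennreal (t powr (-\<gamma>) / \<gamma>)"
      unfolding h_powr by (rule nn_integral_powr_Ici) (use t \<gamma> in auto)
  qed (use t \<gamma> g_nonneg c_nonneg in \<open>auto simp: f_def h_def\<close>)
  then show ?thesis
    by (simp add: f_powr mult.commute nn_integral_set_ennreal indicator_mult_ennreal)
qed

lemma nn_integral_Hardy_kernel:
  fixes q a s :: real
  assumes q: "q > 1" and a: "a > -1" and s: "s > 0"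
  defines "\<gamma> \<equiv> (a + 1) / q"
  shows "(\<integral>\<^sup>+t\<in>{0<..s}. ennreal (t powr a * (t powr (-\<gamma>) / \<gamma>) powr (q-1)) \<partial>lborel)
       = ennreal (\<gamma> powr (-q) * s powr \<gamma>)"
proof -
  have \<gamma>: "\<gamma> > 0" using q a by (simp add: \<gamma>_def)
  have kernel_eq: "t powr a * (t powr (-\<gamma>) / \<gamma>) powr (q-1) = \<gamma> powr (1-q) * t powr (\<gamma>-1)"
    if "t > 0" for t
  proof -
    have "(t powr (-\<gamma>) / \<gamma>) powr (q-1) = (t powr (-\<gamma>)) powr (q-1) / \<gamma> powr (q-1)"
      using \<gamma> by (simp add: powr_divide)
    also have "\<dots> = t powr (- \<gamma> * (q-1)) * inverse (\<gamma> powr (q-1))"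
      by (simp only: powr_powr divide_inverse)
    also have "inverse (\<gamma> powr (q-1)) = \<gamma> powr (1-q)"
      using powr_minus[of \<gamma> "q-1"] by simp
    finally have "(t powr (-\<gamma>) / \<gamma>) powr (q-1) = \<gamma> powr (1-q) * t powr (- \<gamma> * (q-1))"
      by simp
    moreover have "\<gamma> - 1 = a + - \<gamma> * (q-1)" using q by (simp add: \<gamma>_def field_simps)
    ultimately show ?thesis by (simp add: powr_add[symmetric] mult_ac)
  qed
  have "(\<integral>\<^sup>+t\<in>{0<..s}. ennreal (t powr a * (t powr (-\<gamma>) / \<gamma>) powr (q-1)) \<partial>lborel)
      = (\<integral>\<^sup>+t. ennreal (\<gamma> powr (1-q)) * ennreal (indicator {0<..s} t * t powr (\<gamma>-1)) \<partial>lborel)"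
    by (intro nn_integral_cong) (auto simp: kernel_eq indicator_def ennreal_mult[symmetric])
  also have "\<dots> = ennreal (\<gamma> powr (1-q)) * ennreal (s powr \<gamma> / \<gamma>)"
    using nn_integral_powr_Ioc_0[OF s, of "\<gamma>-1"] \<gamma> by (simp add: nn_integral_cmult)
  also have "\<dots> = ennreal (\<gamma> powr (-q) * s powr \<gamma>)"
    using \<gamma> by (simp add: ennreal_mult[symmetric] powr_diff field_simps powr_add[symmetric])
  finally show ?thesis .
qed

lemma Hardy_inequality_tail:
  fixes g G :: "real \<Rightarrow> real" and q a :: real
  assumes q: "q > 1" and a: "a > -1"
    and [measurable]: "g \<in> borel_measurable borel" and g_nonneg: "\<And>s. g s \<ge> 0"
    and G: "\<And>t. t > 0 \<Longrightarrow> ennreal \<bar>G t\<bar> \<le> (\<integral>\<^sup>+s\<in>{t<..}. ennreal (g s) \<partial>lborel)"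
  shows "(\<integral>\<^sup>+t\<in>{0<..}. ennreal (\<bar>G t\<bar> powr q * t powr a) \<partial>lborel)
     \<le> ennreal ((q/(a+1)) powr q) * (\<integral>\<^sup>+t\<in>{0<..}. ennreal (g t powr q * t powr (a+q)) \<partial>lborel)"
proof -
  define \<gamma> where "\<gamma> = (a+1)/q"
  have \<gamma>: "\<gamma> > 0" using q a by (simp add: \<gamma>_def)
  define k where "k t = t powr a * (t powr (-\<gamma>) / \<gamma>) powr (q-1)" for t
  define h where "h s = g s powr q * s powr ((\<gamma>+1) * (q-1))" for s
  have inner: "(\<integral>\<^sup>+t\<in>{0<..s}. ennreal (k t) \<partial>lborel) = ennreal (\<gamma> powr (-q) * s powr \<gamma>)"
    if "s > 0" for s
    using nn_integral_Hardy_kernel[OF q a that] unfolding k_def \<gamma>_def .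
  have "(\<integral>\<^sup>+t\<in>{0<..}. ennreal (\<bar>G t\<bar> powr q * t powr a) \<partial>lborel)
      \<le> (\<integral>\<^sup>+t\<in>{0<..}. ennreal (k t) * (\<integral>\<^sup>+s\<in>{t..}. ennreal (h s) \<partial>lborel) \<partial>lborel)"
  proof (intro nn_integral_mono)
    fix t :: real
    show "ennreal (\<bar>G t\<bar> powr q * t powr a) * indicator {0<..} t
        \<le> ennreal (k t) * (\<integral>\<^sup>+s\<in>{t..}. ennreal (h s) \<partial>lborel) * indicator {0<..} t"
    proof (cases "t > 0")
      case True
      have "ennreal (\<bar>G t\<bar> powr q) * ennreal (t powr a)
          \<le> ennreal ((t powr (-\<gamma>) / \<gamma>) powr (q-1)) * (\<integral>\<^sup>+s\<in>{t..}. ennreal (h s) \<partial>lborel)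
            * ennreal (t powr a)"
        unfolding h_def
        by (intro mult_right_mono tail_integral_Hoelder_bound[OF q \<gamma> True _ g_nonneg G[OF True]]) auto
      then show ?thesis
        using True by (simp add: k_def ennreal_mult mult_ac)
    qed simp
  qed
  also have "\<dots> = (\<integral>\<^sup>+s\<in>{0<..}. ennreal (h s) * (\<integral>\<^sup>+t\<in>{0<..s}. ennreal (k t) \<partial>lborel) \<partial>lborel)"
    by (rule nn_integral_Ioi_Ici_swap) (auto simp: k_def h_def)
  also have "\<dots> = (\<integral>\<^sup>+s\<in>{0<..}. ennreal (\<gamma> powr (-q)) * ennreal (g s powr q * s powr (a+q)) \<partial>lborel)"
  proof (intro nn_integral_cong)
    fix s :: real
    have "h s * (\<gamma> powr (-q) * s powr \<gamma>) = \<gamma> powr (-q) * (g s powr q * s powr (a+q))" if "s > 0"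
    proof -
      have "(\<gamma>+1) * (q-1) + \<gamma> = a + q" using q by (simp add: \<gamma>_def field_simps)
      then show ?thesis using that by (simp add: h_def powr_add[symmetric] mult_ac add.commute)
    qed
    then show "ennreal (h s) * (\<integral>\<^sup>+t\<in>{0<..s}. ennreal (k t) \<partial>lborel) * indicator {0<..} s
        = ennreal (\<gamma> powr (-q)) * ennreal (g s powr q * s powr (a+q)) * indicator {0<..} s"
      by (cases "s > 0") (auto simp: inner h_def ennreal_mult[symmetric])
  qed
  also have "\<dots> = ennreal ((q/(a+1)) powr q) * (\<integral>\<^sup>+t\<in>{0<..}. ennreal (g t powr q * t powr (a+q)) \<partial>lborel)"
    using q a by (subst nn_integral_cmult[symmetric])
      (auto simp: \<gamma>_def powr_minus_divide powr_divide mult.assoc)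
  finally show ?thesis .
qed

section \<open>Geodesic balls in hyperbolic space\<close>

lemma DERIV_le_imp_le:
  fixes f g f' g' :: "real \<Rightarrow> real" and a b :: real
  assumes "a \<le> b" "f a \<le> g a" "continuous_on {a..b} f" "continuous_on {a..b} g"
    and "\<And>x. a < x \<Longrightarrow> x < b \<Longrightarrow> (f has_real_derivative f' x) (at x)"
    and "\<And>x. a < x \<Longrightarrow> x < b \<Longrightarrow> (g has_real_derivative g' x) (at x)"
    and "\<And>x. a < x \<Longrightarrow> x < b \<Longrightarrow> f' x \<le> g' x"
  shows "f b \<le> g b"
proof -
  have "g a - f a \<le> g b - f b"
  proof (rule DERIV_nonneg_imp_increasing_open[where f = "\<lambda>x. g x - f x"])
    fix x assume "a < x" "x < b"
    then show "\<exists>y. ((\<lambda>x. g x - f x) has_real_derivative y) (at x) \<and> 0 \<le> y"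
      using assms(5-7) by (intro exI[of _ "g' x - f' x"]) (auto intro: DERIV_diff)
  qed (use assms in \<open>auto intro!: continuous_intros\<close>)
  then show ?thesis using assms(2) by simp
qed

definition sinh_pow_integral :: "nat \<Rightarrow> real \<Rightarrow> real" where
  "sinh_pow_integral N \<rho> = integral {0..\<rho>} (\<lambda>s. sinh s ^ (N - 1))"

lemma sinh_pow_integral_0 [simp]: "sinh_pow_integral N 0 = 0"
  by (simp add: sinh_pow_integral_def)

lemma has_real_derivative_sinh_pow_integral:
  assumes "x > 0"
  shows "(sinh_pow_integral N has_real_derivative sinh x ^ (N - 1)) (at x)"
proof -
  have "(sinh_pow_integral N has_real_derivative sinh x ^ (N - 1)) (at x within {0..x+1})"
    unfolding sinh_pow_integral_def[abs_def]
    by (rule integral_has_real_derivative) (use assms in \<open>auto intro!: continuous_intros\<close>)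
  moreover have "at x within {0..x+1} = at x" using assms by (intro at_within_Icc_at) auto
  ultimately show ?thesis by simp
qed

lemma continuous_on_sinh_pow_integral: "continuous_on {0..b} (sinh_pow_integral N)"
  unfolding sinh_pow_integral_def[abs_def]
  by (rule indefinite_integral_continuous_1)
     (auto intro!: integrable_continuous_real continuous_intros)

lemma sinh_pow_integral_strict_mono:
  assumes "0 \<le> x" "x < y"
  shows "sinh_pow_integral N x < sinh_pow_integral N y"
proof (rule DERIV_pos_imp_increasing_open[OF assms(2)])
  fix z assume "x < z" "z < y"
  then have "z > 0" using assms by simp
  then show "\<exists>d. (sinh_pow_integral N has_real_derivative d) (at z) \<and> d > 0"
    using has_real_derivative_sinh_pow_integral[of z N] by (intro exI[of _ "sinh z ^ (N - 1)"]) auto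
qed (use assms in \<open>auto intro!: continuous_on_subset[OF continuous_on_sinh_pow_integral]\<close>)

lemma sinh_pow_integral_pos: "\<rho> > 0 \<Longrightarrow> sinh_pow_integral N \<rho> > 0"
  using sinh_pow_integral_strict_mono[of 0 \<rho> N] by simp

lemma sinh_pow_integral_nonneg: "\<rho> \<ge> 0 \<Longrightarrow> sinh_pow_integral N \<rho> \<ge> 0"
  using sinh_pow_integral_pos[of \<rho> N] by (cases "\<rho> = 0") auto

lemma sinh_pow_integral_ge_linear:
  assumes "\<rho> \<ge> 1"
  shows "(\<rho> - 1) * sinh 1 ^ (N - 1) \<le> sinh_pow_integral N \<rho>"
proof (rule DERIV_le_imp_le[OF assms, where f' = "\<lambda>_. sinh 1 ^ (N - 1)" and g' = "\<lambda>x. sinh x ^ (N - 1)"])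
  show "continuous_on {1..\<rho>} (sinh_pow_integral N)"
    by (rule continuous_on_subset[OF continuous_on_sinh_pow_integral]) auto
  fix x assume x: "1 < x" "x < \<rho>"
  then show "(sinh_pow_integral N has_real_derivative sinh x ^ (N - 1)) (at x)"
    by (intro has_real_derivative_sinh_pow_integral) auto
  show "sinh 1 ^ (N - 1) \<le> sinh x ^ (N - 1)"
    using x by (intro power_mono) auto
qed (auto intro!: continuous_intros derivative_eq_intros sinh_pow_integral_nonneg)

lemma has_real_derivative_sinh_pow_integral_powr:
  assumes "x > 0" "c > 0"
  shows "((\<lambda>x. (c * sinh_pow_integral N x) powr e) has_real_derivative
           e * (c * sinh_pow_integral N x) powr (e - 1) * (c * sinh x ^ (N - 1))) (at x)"
proof -
  have "c * sinh_pow_integral N x > 0"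
    using sinh_pow_integral_pos[OF assms(1)] assms(2) by simp
  from DERIV_fun_powr[OF DERIV_cmult[OF has_real_derivative_sinh_pow_integral[OF assms(1)]] this]
  show ?thesis by simp
qed

lemma continuous_on_sinh_pow_integral_powr:
  assumes "c \<ge> 0" "e > 0"
  shows "continuous_on {0..b} (\<lambda>x. (c * sinh_pow_integral N x) powr e)"
  by (rule continuous_on_powr')
     (use assms sinh_pow_integral_nonneg in \<open>auto intro!: continuous_intros continuous_on_sinh_pow_integral\<close>)

lemma sinh_pow_integral_le:
  assumes "N \<ge> 1" "\<rho> \<ge> 0"
  shows "(real N - 1) * sinh_pow_integral N \<rho> \<le> sinh \<rho> ^ (N - 1)"
proof -
  obtain m where N: "N = Suc m" using assms by (cases N) auto
  have "real m * sinh_pow_integral N \<rho> \<le> sinh \<rho> ^ m"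
  proof (rule DERIV_le_imp_le[OF assms(2), where f' = "\<lambda>x. real m * sinh x ^ m"
        and g' = "\<lambda>x. real m * sinh x ^ (m - 1) * cosh x"])
    fix x :: real assume x: "0 < x" "x < \<rho>"
    show "((\<lambda>x. real m * sinh_pow_integral N x) has_real_derivative real m * sinh x ^ m) (at x)"
      using x has_real_derivative_sinh_pow_integral[of x N] by (intro DERIV_cmult) (auto simp: N)
    show "((\<lambda>x. sinh x ^ m) has_real_derivative real m * sinh x ^ (m - 1) * cosh x) (at x)"
      by (rule derivative_eq_intros refl | simp)+
    have "sinh x ^ m \<le> sinh x ^ (m - 1) * cosh x" if "m > 0"
    proof -
      have "sinh x ^ m = sinh x ^ (m - 1) * sinh x"
        using that by (simp add: power_Suc2[symmetric])
      then show ?thesis using x by (auto intro!: mult_left_mono sinh_le_cosh_real)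
    qed
    then show "real m * sinh x ^ m \<le> real m * sinh x ^ (m - 1) * cosh x"
      by (cases "m = 0") (auto simp: mult.assoc intro!: mult_left_mono)
  qed (auto intro!: continuous_intros continuous_on_sinh_pow_integral)
  then show ?thesis by (simp add: N)
qed

lemma sinh_pow_integral_powr_le_sinh_square:
  assumes N: "N \<ge> 2" and x: "x > 0"
  shows "((real N - 1) * sinh_pow_integral N x) powr (2 / (real N - 1)) \<le> sinh x ^ 2"
proof -
  have s: "sinh x > 0" using x by simp
  have "((real N - 1) * sinh_pow_integral N x) powr (2 / (real N - 1))
      \<le> (sinh x ^ (N - 1)) powr (2 / (real N - 1))"
    using N x sinh_pow_integral_le[of N x]
    by (intro powr_mono2) (auto simp: sinh_pow_integral_nonneg)
  also have "\<dots> = sinh x powr (real (N - 1) * (2 / (real N - 1)))"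
    using s by (simp add: powr_realpow[symmetric] powr_powr)
  also have "real (N - 1) * (2 / (real N - 1)) = 2"
    using N by (simp add: of_nat_diff field_simps)
  finally show ?thesis using s by (simp add: powr_realpow)
qed

lemma sinh_pow_integral_cosh_bound:
  assumes N: "N \<ge> 2" and \<rho>: "\<rho> \<ge> 0"
  shows "((real N - 1) * sinh_pow_integral N \<rho>) powr ((real N + 1) / (real N - 1))
           + real N * sinh_pow_integral N \<rho> \<le> sinh \<rho> ^ N * cosh \<rho>"
proof -
  define e where "e = (real N + 1) / (real N - 1)"
  define Y where "Y x = (real N - 1) * sinh_pow_integral N x" for x
  have e: "e > 0" "e - 1 = 2 / (real N - 1)" "e * (real N - 1) = real N + 1"
    using N by (simp_all add: e_def field_simps)
  have "Y \<rho> powr e + real N * sinh_pow_integral N \<rho> \<le> sinh \<rho> ^ N * cosh \<rho>"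
  proof (rule DERIV_le_imp_le[OF \<rho>,
        where f' = "\<lambda>x. e * Y x powr (e - 1) * ((real N - 1) * sinh x ^ (N - 1)) + real N * sinh x ^ (N - 1)"
          and g' = "\<lambda>x. real N * sinh x ^ (N - 1) * cosh x * cosh x + sinh x ^ N * sinh x"])
    fix x :: real assume x: "0 < x" "x < \<rho>"
    show "((\<lambda>x. Y x powr e + real N * sinh_pow_integral N x) has_real_derivative
        e * Y x powr (e - 1) * ((real N - 1) * sinh x ^ (N - 1)) + real N * sinh x ^ (N - 1)) (at x)"
      unfolding Y_def using N x
      by (intro DERIV_add DERIV_cmult has_real_derivative_sinh_pow_integral_powr
            has_real_derivative_sinh_pow_integral) auto
    show "((\<lambda>x. sinh x ^ N * cosh x) has_real_derivative
        real N * sinh x ^ (N - 1) * cosh x * cosh x + sinh x ^ N * sinh x) (at x)"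
      by (rule derivative_eq_intros refl | simp)+
    have s: "sinh x > 0" using x by simp
    have Y_le: "Y x powr (e - 1) \<le> sinh x ^ 2"
      unfolding Y_def e(2) by (rule sinh_pow_integral_powr_le_sinh_square[OF N x(1)])
    have cosh_sq: "cosh x * cosh x = 1 + sinh x ^ 2"
      using cosh_square_eq[of x] by (simp add: power2_eq_square)
    have sinh_N: "sinh x ^ N = sinh x ^ (N - 1) * sinh x"
      using N by (simp add: power_Suc2[symmetric])
    have "e * Y x powr (e - 1) * ((real N - 1) * sinh x ^ (N - 1))
        = (real N + 1) * sinh x ^ (N - 1) * Y x powr (e - 1)"
      using e(3) by (simp add: mult_ac)
    also have "\<dots> \<le> (real N + 1) * sinh x ^ (N - 1) * sinh x ^ 2"
      using Y_le s by (intro mult_left_mono) auto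
    finally have "e * Y x powr (e - 1) * ((real N - 1) * sinh x ^ (N - 1))
        \<le> (real N + 1) * sinh x ^ (N - 1) * sinh x ^ 2" .
    moreover have "real N * sinh x ^ (N - 1) * cosh x * cosh x + sinh x ^ N * sinh x
        = real N * sinh x ^ (N - 1) + (real N + 1) * sinh x ^ (N - 1) * sinh x ^ 2"
      unfolding sinh_N power2_eq_square mult.assoc cosh_sq by (simp add: algebra_simps)
    ultimately show "e * Y x powr (e - 1) * ((real N - 1) * sinh x ^ (N - 1)) + real N * sinh x ^ (N - 1)
        \<le> real N * sinh x ^ (N - 1) * cosh x * cosh x + sinh x ^ N * sinh x"
      by simp
  qed (use N e in \<open>auto intro!: continuous_intros continuous_on_sinh_pow_integral
         continuous_on_sinh_pow_integral_powr simp: Y_def\<close>)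
  then show ?thesis by (simp add: Y_def e_def)
qed

lemma sinh_pow_integral_square_bound:
  assumes N: "N \<ge> 2" and \<rho>: "\<rho> \<ge> 0"
  shows "((real N - 1) * sinh_pow_integral N \<rho>) powr (2 * real N / (real N - 1))
           + (real N * sinh_pow_integral N \<rho>)\<^sup>2 \<le> sinh \<rho> ^ (2 * N)"
proof -
  define k where "k = 2 * real N / (real N - 1)"
  define Y where "Y x = (real N - 1) * sinh_pow_integral N x" for x
  have k: "k > 0" "k - 1 = (real N + 1) / (real N - 1)" "k * (real N - 1) = 2 * real N"
    using N by (simp_all add: k_def field_simps)
  have "Y \<rho> powr k + (real N * sinh_pow_integral N \<rho>)\<^sup>2 \<le> sinh \<rho> ^ (2 * N)"
  proof (rule DERIV_le_imp_le[OF \<rho>,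
        where f' = "\<lambda>x. k * Y x powr (k - 1) * ((real N - 1) * sinh x ^ (N - 1))
                       + 2 * (real N * sinh_pow_integral N x) * (real N * sinh x ^ (N - 1))"
          and g' = "\<lambda>x. real (2 * N) * sinh x ^ (2 * N - 1) * cosh x"])
    fix x :: real assume x: "0 < x" "x < \<rho>"
    show "((\<lambda>x. Y x powr k + (real N * sinh_pow_integral N x)\<^sup>2) has_real_derivative
        k * Y x powr (k - 1) * ((real N - 1) * sinh x ^ (N - 1))
          + 2 * (real N * sinh_pow_integral N x) * (real N * sinh x ^ (N - 1))) (at x)"
      unfolding Y_def using N x
      by (intro DERIV_add has_real_derivative_sinh_pow_integral_powr
            DERIV_cong[OF DERIV_power[OF DERIV_cmult[OF has_real_derivative_sinh_pow_integral]]])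
         auto
    show "((\<lambda>x. sinh x ^ (2 * N)) has_real_derivative real (2 * N) * sinh x ^ (2 * N - 1) * cosh x) (at x)"
      by (rule derivative_eq_intros refl | simp)+
    have "Y x powr (k - 1) + real N * sinh_pow_integral N x \<le> sinh x ^ N * cosh x"
      unfolding Y_def k(2) using sinh_pow_integral_cosh_bound[OF N, of x] x by simp
    then have "2 * real N * sinh x ^ (N - 1) * (Y x powr (k - 1) + real N * sinh_pow_integral N x)
        \<le> 2 * real N * sinh x ^ (N - 1) * (sinh x ^ N * cosh x)"
      using x by (intro mult_left_mono) auto
    moreover have "sinh x ^ (2 * N - 1) = sinh x ^ (N - 1) * sinh x ^ N"
    proof -
      have "2 * N - 1 = (N - 1) + N" using N by simp
      then show ?thesis by (simp only: power_add)
    qed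
    moreover have "k * Y x powr (k - 1) * ((real N - 1) * sinh x ^ (N - 1))
        = 2 * real N * sinh x ^ (N - 1) * Y x powr (k - 1)"
      by (subst k(3)[symmetric]) (simp add: mult_ac)
    ultimately show "k * Y x powr (k - 1) * ((real N - 1) * sinh x ^ (N - 1))
          + 2 * (real N * sinh_pow_integral N x) * (real N * sinh x ^ (N - 1))
        \<le> real (2 * N) * sinh x ^ (2 * N - 1) * cosh x"
      by (simp add: algebra_simps)
  qed (use N k in \<open>auto intro!: continuous_intros continuous_on_sinh_pow_integral
         continuous_on_sinh_pow_integral_powr simp: Y_def\<close>)
  then show ?thesis by (simp add: Y_def k_def)
qed

lemma powr_add_powr_le:
  fixes a b r :: real
  assumes "a \<ge> 0" "b \<ge> 0" "r \<ge> 1"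
  shows "a powr r + b powr r \<le> (a + b) powr r"
proof (cases "a + b = 0")
  case False
  then have s: "a + b > 0" using assms by simp
  have "(a / (a+b)) powr r \<le> (a / (a+b)) powr 1" "(b / (a+b)) powr r \<le> (b / (a+b)) powr 1"
    using assms s by (intro powr_mono'; simp add: field_simps)+
  then have "(a / (a+b)) powr r + (b / (a+b)) powr r \<le> a / (a+b) + b / (a+b)"
    using assms s by simp
  also have "\<dots> = 1" using s by (simp add: add_divide_distrib[symmetric])
  finally have "(a / (a+b)) powr r + (b / (a+b)) powr r \<le> 1" .
  then show ?thesis
    using assms s by (simp add: powr_divide add_divide_distrib[symmetric] divide_le_eq)
qed (use assms in \<open>simp add: add_nonneg_eq_0_iff\<close>)

lemma sinh_pow_integral_powr_bound:
  assumes N: "N \<ge> 2" and \<rho>: "\<rho> \<ge> 0" and q: "q \<ge> 2 * real N / (real N - 1)"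
  shows "((real N - 1) * sinh_pow_integral N \<rho>) powr q
           + (real N * sinh_pow_integral N \<rho>) powr (q * (real N - 1) / real N)
         \<le> (sinh \<rho> ^ (N - 1)) powr q"
proof (cases "\<rho> = 0")
  case False
  then have \<rho>_pos: "\<rho> > 0" using \<rho> by simp
  define k where "k = 2 * real N / (real N - 1)"
  define r where "r = q / k"
  have k: "k > 0" and r: "r \<ge> 1" using N q by (auto simp: k_def r_def field_simps)
  let ?Y = "(real N - 1) * sinh_pow_integral N \<rho>"
  let ?X = "real N * sinh_pow_integral N \<rho>"
  have Y: "?Y \<ge> 0" and X: "?X > 0"
    using N \<rho>_pos by (simp_all add: sinh_pow_integral_pos less_imp_le)
  have "(?Y powr k) powr r = ?Y powr q" using k by (simp add: powr_powr r_def)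
  moreover have "(?X\<^sup>2) powr r = ?X powr (q * (real N - 1) / real N)"
  proof -
    have "?X\<^sup>2 = ?X powr 2" using X by (simp add: powr_numeral)
    then have "(?X\<^sup>2) powr r = ?X powr (2 * r)" by (simp add: powr_powr)
    moreover have "2 * r = q * (real N - 1) / real N" using N by (simp add: r_def k_def field_simps)
    ultimately show ?thesis by simp
  qed
  ultimately have "?Y powr q + ?X powr (q * (real N - 1) / real N) = (?Y powr k) powr r + (?X\<^sup>2) powr r"
    by simp
  also have "\<dots> \<le> (?Y powr k + ?X\<^sup>2) powr r"
    using r by (intro powr_add_powr_le) auto
  also have "\<dots> \<le> (sinh \<rho> ^ (2 * N)) powr r"
    using r Y sinh_pow_integral_square_bound[OF N \<rho>] by (intro powr_mono2) (auto simp: k_def)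
  also have "\<dots> = (sinh \<rho> ^ (N - 1)) powr q"
  proof -
    have s: "sinh \<rho> > 0" using \<rho>_pos by simp
    have "(sinh \<rho> ^ (2 * N)) powr r = sinh \<rho> powr (real (2 * N) * r)"
      using s by (simp add: powr_realpow[symmetric] powr_powr del: of_nat_mult)
    also have "real (2 * N) * r = real (N - 1) * q"
      using N k by (simp add: r_def k_def of_nat_diff field_simps)
    also have "sinh \<rho> powr (real (N - 1) * q) = (sinh \<rho> ^ (N - 1)) powr q"
      using s by (simp add: powr_realpow[symmetric] powr_powr)
    finally show ?thesis .
  qed
  finally show ?thesis .
qed simp

lemma hyp_ball_volume_eq_ex1:
  assumes "N > 0" "\<sigma> > 0" "t \<ge> 0"
  shows "\<exists>!\<rho>. \<rho> \<ge> 0 \<and> t = real N * \<sigma> * sinh_pow_integral N \<rho>"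
proof (rule ex_ex1I)
  define b where "b = 1 + t / (real N * \<sigma> * sinh 1 ^ (N - 1))"
  have b: "b \<ge> 1" using assms by (simp add: b_def)
  have "t = real N * \<sigma> * ((b - 1) * sinh 1 ^ (N - 1))"
    using assms by (simp add: b_def field_simps)
  also have "\<dots> \<le> real N * \<sigma> * sinh_pow_integral N b"
    using assms sinh_pow_integral_ge_linear[OF b] by (intro mult_left_mono) auto
  finally have "\<exists>\<rho>\<ge>0. \<rho> \<le> b \<and> real N * \<sigma> * sinh_pow_integral N \<rho> = t"
    by (intro IVT') (use assms b in \<open>auto intro!: continuous_intros continuous_on_sinh_pow_integral\<close>)
  then show "\<exists>\<rho>. \<rho> \<ge> 0 \<and> t = real N * \<sigma> * sinh_pow_integral N \<rho>" by auto
next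
  fix \<rho> \<rho>' assume "\<rho> \<ge> 0 \<and> t = real N * \<sigma> * sinh_pow_integral N \<rho>"
    "\<rho>' \<ge> 0 \<and> t = real N * \<sigma> * sinh_pow_integral N \<rho>'"
  then have "sinh_pow_integral N \<rho> = sinh_pow_integral N \<rho>'" "\<rho> \<ge> 0" "\<rho>' \<ge> 0"
    using assms by auto
  then show "\<rho> = \<rho>'"
    by (metis linorder_neq_iff order_less_irrefl sinh_pow_integral_strict_mono)
qed

text \<open>With \<open>\<sigma>\<close> the volume of the Euclidean unit ball, \<open>N \<sigma> sinh_pow_integral N \<rho>\<close> is the volume
  of a geodesic ball of radius \<open>\<rho>\<close> in \<open>\<bbbH>\<^sup>N\<close>, and \<open>N \<sigma> sinh \<rho> ^ (N - 1)\<close> the area of its boundary.\<close>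

definition hyp_ball_radius :: "nat \<Rightarrow> real \<Rightarrow> real \<Rightarrow> real" where
  "hyp_ball_radius N \<sigma> t = (THE \<rho>. \<rho> \<ge> 0 \<and> t = real N * \<sigma> * sinh_pow_integral N \<rho>)"

definition hyp_sphere_area :: "nat \<Rightarrow> real \<Rightarrow> real \<Rightarrow> real" where
  "hyp_sphere_area N \<sigma> t = real N * \<sigma> * sinh (hyp_ball_radius N \<sigma> t) ^ (N - 1)"

lemma hyp_ball_radius:
  assumes "N > 0" "\<sigma> > 0" "t \<ge> 0"
  shows "hyp_ball_radius N \<sigma> t \<ge> 0" "real N * \<sigma> * sinh_pow_integral N (hyp_ball_radius N \<sigma> t) = t"
  using theI'[OF hyp_ball_volume_eq_ex1[OF assms]] by (auto simp: hyp_ball_radius_def)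

lemma hyp_ball_radius_volume:
  assumes "N > 0" "\<sigma> > 0" "\<rho> \<ge> 0"
  shows "hyp_ball_radius N \<sigma> (real N * \<sigma> * sinh_pow_integral N \<rho>) = \<rho>"
  unfolding hyp_ball_radius_def
  using assms by (intro the1_equality hyp_ball_volume_eq_ex1) (auto simp: sinh_pow_integral_nonneg)

lemma hyp_ball_radius_pos:
  assumes "N > 0" "\<sigma> > 0" "t > 0"
  shows "hyp_ball_radius N \<sigma> t > 0"
  using hyp_ball_radius[of N \<sigma> t] assms by (cases "hyp_ball_radius N \<sigma> t = 0") auto

lemma isCont_hyp_ball_radius:
  assumes "N > 0" "\<sigma> > 0" "t > 0"
  shows "isCont (hyp_ball_radius N \<sigma>) t"
proof -
  define \<rho> where "\<rho> = hyp_ball_radius N \<sigma> t"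
  have \<rho>: "\<rho> > 0" "real N * \<sigma> * sinh_pow_integral N \<rho> = t"
    using hyp_ball_radius_pos[OF assms] hyp_ball_radius[OF assms(1,2)] assms(3) by (auto simp: \<rho>_def)
  have "isCont (hyp_ball_radius N \<sigma>) (real N * \<sigma> * sinh_pow_integral N \<rho>)"
  proof (rule isCont_inverse_function2[of "\<rho>/2" \<rho> "\<rho>+1"])
    fix z assume "\<rho> / 2 \<le> z" "z \<le> \<rho> + 1"
    then have z: "z > 0" using \<rho> by simp
    then show "hyp_ball_radius N \<sigma> (real N * \<sigma> * sinh_pow_integral N z) = z"
      using assms by (intro hyp_ball_radius_volume) auto
    show "isCont (\<lambda>z. real N * \<sigma> * sinh_pow_integral N z) z"
      using has_real_derivative_sinh_pow_integral[OF z] by (intro continuous_intros DERIV_isCont)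
  qed (use \<rho> in auto)
  then show ?thesis using \<rho> by simp
qed

lemma hyp_sphere_area_ge:
  assumes "N > 0" "\<sigma> > 0" "t \<ge> 0"
  shows "(real N - 1) * t \<le> hyp_sphere_area N \<sigma> t"
proof -
  note \<rho> = hyp_ball_radius[OF assms]
  have "(real N - 1) * t = real N * \<sigma> * ((real N - 1) * sinh_pow_integral N (hyp_ball_radius N \<sigma> t))"
    using \<rho>(2) by (simp add: algebra_simps)
  also have "\<dots> \<le> hyp_sphere_area N \<sigma> t"
    unfolding hyp_sphere_area_def
    using assms \<rho>(1) by (intro mult_left_mono sinh_pow_integral_le) auto
  finally show ?thesis .
qed

lemma isCont_hyp_sphere_area:
  assumes "N > 0" "\<sigma> > 0" "t > 0"
  shows "isCont (hyp_sphere_area N \<sigma>) t"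
  unfolding hyp_sphere_area_def[abs_def]
  using isCont_hyp_ball_radius[OF assms] by (auto intro!: continuous_intros isCont_o2[of _ sinh])

lemma hyp_isoperimetric_powr:
  assumes N: "N \<ge> 2" and \<sigma>: "\<sigma> > 0" and t: "t \<ge> 0" and q: "q \<ge> 2 * real N / (real N - 1)"
  shows "((real N - 1) * t) powr q + real N powr q * \<sigma> powr (q / real N) * t powr (q * (real N - 1) / real N)
     \<le> hyp_sphere_area N \<sigma> t powr q"
proof -
  define \<rho> where "\<rho> = hyp_ball_radius N \<sigma> t"
  define P where "P = sinh_pow_integral N \<rho>"
  define c where "c = q * (real N - 1) / real N"
  have \<rho>: "\<rho> \<ge> 0" and t_eq: "t = real N * \<sigma> * P"
    using hyp_ball_radius[of N \<sigma> t] assms by (auto simp: \<rho>_def P_def)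
  have P: "P \<ge> 0" using \<rho> by (simp add: P_def sinh_pow_integral_nonneg)
  have "(real N * \<sigma>) powr q * (((real N - 1) * P) powr q + (real N * P) powr c)
      \<le> (real N * \<sigma>) powr q * (sinh \<rho> ^ (N - 1)) powr q"
    using sinh_pow_integral_powr_bound[OF N \<rho> q] by (intro mult_left_mono) (auto simp: P_def c_def)
  moreover have "(real N * \<sigma>) powr q * ((real N - 1) * P) powr q = ((real N - 1) * t) powr q"
    using N \<sigma> P by (simp add: t_eq powr_mult[symmetric] algebra_simps)
  moreover have "(real N * \<sigma>) powr q * (real N * P) powr c
      = real N powr q * \<sigma> powr (q / real N) * t powr c"
  proof -
    have "q / real N = q - c" using N by (simp add: c_def field_simps)
    then have "\<sigma> powr (q / real N) * t powr c = \<sigma> powr q * (real N * P) powr c"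
      using N \<sigma> P by (simp add: t_eq powr_diff powr_mult mult_ac)
    then show ?thesis using N \<sigma> by (simp add: powr_mult mult_ac)
  qed
  moreover have "(real N * \<sigma>) powr q * (sinh \<rho> ^ (N - 1)) powr q = hyp_sphere_area N \<sigma> t powr q"
    using N \<sigma> \<rho> by (simp add: hyp_sphere_area_def \<rho>_def powr_mult)
  ultimately show ?thesis by (simp add: distrib_left c_def)
qed

section \<open>Hardy inequality for tail integrals with a remainder term\<close>

lemma set_integrable_Ioi_if_inverse_square_bound:
  fixes g :: "real \<Rightarrow> real"
  assumes g: "continuous_on {0<..} g" and bound: "\<And>s. s > 0 \<Longrightarrow> \<bar>g s\<bar> \<le> C / s\<^sup>2" and t: "t > 0"
  shows "set_integrable lborel {t<..} g"
proof -
  have C: "C \<ge> 0" using bound[of 1] by simp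
  have [measurable]: "(\<lambda>s. indicator {t<..} s * g s) \<in> borel_measurable borel"
  proof -
    have "(\<lambda>s. if s \<in> {0<..} then g s else 0) \<in> borel_measurable borel"
      by (intro borel_measurable_continuous_on_if g) auto
    then have "(\<lambda>s. indicator {t<..} s * (if s \<in> {0<..} then g s else 0)) \<in> borel_measurable borel"
      by measurable
    also have "(\<lambda>s. indicator {t<..} s * (if s \<in> {0<..} then g s else 0)) = (\<lambda>s. indicator {t<..} s * g s)"
      using t by (auto simp: fun_eq_iff indicator_def)
    finally show ?thesis .
  qed
  have "(\<integral>\<^sup>+s. ennreal (norm (indicator {t<..} s * g s)) \<partial>lborel)
      \<le> (\<integral>\<^sup>+s. ennreal C * ennreal (indicator {t..} s * s powr (-(1+1))) \<partial>lborel)"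
  proof (rule nn_integral_mono)
    fix s :: real
    show "ennreal (norm (indicator {t<..} s * g s)) \<le> ennreal C * ennreal (indicator {t..} s * s powr (-(1+1)))"
    proof (cases "t < s")
      case True
      then have "\<bar>g s\<bar> \<le> C * s powr (-(1+1))"
        using bound[of s] t by (simp add: powr_minus divide_inverse powr_add power2_eq_square)
      then show ?thesis using True C by (simp add: ennreal_mult[symmetric] ennreal_leI)
    qed simp
  qed
  also have "\<dots> = ennreal C * ennreal (t powr (-1) / 1)"
    by (subst nn_integral_cmult) (auto simp: nn_integral_powr_Ici[OF t, of 1, simplified])
  also have "\<dots> < \<infinity>" by (simp add: ennreal_mult_less_top)
  finally have "integrable lborel (\<lambda>s. indicator {t<..} s * g s)"
    by (intro integrableI_bounded) auto
  then show ?thesis by (simp add: set_integrable_def)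
qed

lemma has_real_derivative_tail_integral:
  fixes g :: "real \<Rightarrow> real"
  assumes g: "continuous_on {0<..} g" and tails: "\<And>t. t > 0 \<Longrightarrow> set_integrable lborel {t<..} g"
    and t: "t > 0"
  shows "((\<lambda>t. LINT s:{t<..}|lborel. g s) has_real_derivative - g t) (at t)"
proof -
  define a where "a = t / 2"
  have a: "a > 0" "a < t" using t by (auto simp: a_def)
  have int: "set_integrable lborel A g" if "A \<in> sets lborel" "A \<subseteq> {a..}" for A
    using that a by (intro set_integrable_subset[OF tails[of "a/2"]]) auto
  define c where "c = (LINT s:{a..}|lborel. g s)"
  have eq: "(LINT s:{x<..}|lborel. g s) = c - integral {a..x} g" if "x \<in> {a<..}" for x
  proof -
    have "{a..} = {a..x} \<union> {x<..}" using that by auto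
    then have "c = (LINT s:{a..x}|lborel. g s) + (LINT s:{x<..}|lborel. g s)"
      unfolding c_def by (simp only:) (rule set_integral_Un, auto intro!: int)
    moreover have "(LINT s:{a..x}|lborel. g s) = integral {a..x} g"
      by (rule set_borel_integral_eq_integral(2)) (rule int, auto)
    ultimately show ?thesis by simp
  qed
  have "((\<lambda>x. integral {a..x} g) has_real_derivative g t) (at t within {a..2*t})"
    using a t by (intro integral_has_real_derivative continuous_on_subset[OF g]) auto
  moreover have "at t within {a..2*t} = at t" using a t by (intro at_within_Icc_at) auto
  ultimately have "((\<lambda>x. c - integral {a..x} g) has_real_derivative - g t) (at t)"
    by (auto intro!: derivative_eq_intros)
  then show ?thesis
    by (rule has_field_derivative_transform_within_open[of _ _ _ "{a<..}"]) (use a eq in auto)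
qed

lemma abs_tail_integral_eq_nn_integral:
  fixes g :: "real \<Rightarrow> real"
  assumes g: "set_integrable lborel {t<..} g" and g_nonneg: "\<And>s. s > t \<Longrightarrow> g s \<ge> 0"
  shows "ennreal \<bar>LINT s:{t<..}|lborel. g s\<bar> = (\<integral>\<^sup>+s\<in>{t<..}. ennreal (g s) \<partial>lborel)"
proof -
  have "(LINT s:{t<..}|lborel. g s) \<ge> 0" unfolding set_lebesgue_integral_def
    by (rule integral_nonneg_AE) (use g_nonneg in \<open>auto simp: indicator_def\<close>)
  moreover have "(\<integral>\<^sup>+s. ennreal (indicator {t<..} s *\<^sub>R g s) \<partial>lborel) = ennreal (LINT s:{t<..}|lborel. g s)"
    using g g_nonneg unfolding set_integrable_def set_lebesgue_integral_def
    by (intro nn_integral_eq_integral) (auto simp: indicator_def)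
  moreover have "(\<integral>\<^sup>+s. ennreal (indicator {t<..} s *\<^sub>R g s) \<partial>lborel) = (\<integral>\<^sup>+s\<in>{t<..}. ennreal (g s) \<partial>lborel)"
    by (intro nn_integral_cong) (auto simp: indicator_def)
  ultimately show ?thesis by simp
qed

lemma tail_integral_Hardy_with_remainder:
  fixes g W :: "real \<Rightarrow> real" and q a b e \<kappa> c K :: real
  defines "v \<equiv> \<lambda>t. LINT s:{t<..}|lborel. g s"
  assumes q: "q > 1" and a: "a > -1" and \<kappa>: "\<kappa> \<ge> 0" and c: "c \<ge> 0"
    and g: "continuous_on {0<..} g" and g_nonneg: "\<And>s. s > 0 \<Longrightarrow> g s \<ge> 0"
    and tails: "\<And>t. t > 0 \<Longrightarrow> set_integrable lborel {t<..} g"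
    and W: "\<And>t. t > 0 \<Longrightarrow> (\<kappa> * t) powr q + c * t powr e \<le> W t powr q"
    and K: "K = \<kappa> * (a + 1) / q" and b: "b = a + e"
  shows "ennreal (K powr q) * (\<integral>\<^sup>+t\<in>{0<..}. ennreal (\<bar>v t\<bar> powr q * t powr a) \<partial>lborel)
       + ennreal c * (\<integral>\<^sup>+t\<in>{0<..}. ennreal (\<bar>deriv v t\<bar> powr q * t powr b) \<partial>lborel)
     \<le> (\<integral>\<^sup>+t\<in>{0<..}. ennreal (\<bar>deriv v t\<bar> powr q * W t powr q * t powr a) \<partial>lborel)"
proof -
  define g0 where "g0 s = (if s \<in> {0<..} then g s else 0)" for s
  have [measurable]: "g0 \<in> borel_measurable borel"
    unfolding g0_def[abs_def] by (intro borel_measurable_continuous_on_if g) auto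
  have g0_nonneg: "g0 s \<ge> 0" for s by (simp add: g0_def g_nonneg)
  have deriv_v: "\<bar>deriv v t\<bar> = g0 t" if "t > 0" for t
    using DERIV_imp_deriv[OF has_real_derivative_tail_integral[OF g tails that]] that g_nonneg[OF that]
    by (simp add: v_def g0_def)
  have v_le: "ennreal \<bar>v t\<bar> \<le> (\<integral>\<^sup>+s\<in>{t<..}. ennreal (g0 s) \<partial>lborel)" if t: "t > 0" for t
  proof -
    have "ennreal \<bar>v t\<bar> = (\<integral>\<^sup>+s\<in>{t<..}. ennreal (g s) \<partial>lborel)"
      unfolding v_def by (rule abs_tail_integral_eq_nn_integral[OF tails[OF t]]) (use t g_nonneg in auto)
    also have "\<dots> = (\<integral>\<^sup>+s\<in>{t<..}. ennreal (g0 s) \<partial>lborel)"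
      using t by (intro nn_integral_cong) (auto simp: indicator_def g0_def)
    finally show ?thesis by simp
  qed
  define I where "I = (\<integral>\<^sup>+t\<in>{0<..}. ennreal (g0 t powr q * t powr (a+q)) \<partial>lborel)"
  have "ennreal (K powr q) * (\<integral>\<^sup>+t\<in>{0<..}. ennreal (\<bar>v t\<bar> powr q * t powr a) \<partial>lborel)
      \<le> ennreal (K powr q) * (ennreal ((q/(a+1)) powr q) * I)"
    unfolding I_def by (intro mult_left_mono Hardy_inequality_tail[OF q a _ g0_nonneg v_le]) auto
  also have "\<dots> = ennreal (K powr q * (q/(a+1)) powr q) * I"
    by (simp add: mult.assoc[symmetric] ennreal_mult[symmetric])
  also have "K powr q * (q/(a+1)) powr q = \<kappa> powr q"
    using q a \<kappa> by (simp add: K powr_mult[symmetric])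
  finally have hardy: "ennreal (K powr q) * (\<integral>\<^sup>+t\<in>{0<..}. ennreal (\<bar>v t\<bar> powr q * t powr a) \<partial>lborel)
      \<le> ennreal (\<kappa> powr q) * I" .
  have pointwise: "\<kappa> powr q * (g0 t powr q * t powr (a+q)) + c * (g0 t powr q * t powr b)
      \<le> \<bar>deriv v t\<bar> powr q * W t powr q * t powr a" if "t \<in> {0<..}" for t
  proof -
    have t: "t > 0" using that by simp
    have "(\<kappa> * t) powr q = \<kappa> powr q * t powr q" using \<kappa> t by (simp add: powr_mult)
    then have "\<kappa> powr q * t powr (a+q) + c * t powr b = ((\<kappa> * t) powr q + c * t powr e) * t powr a"
      by (simp add: b powr_add distrib_left distrib_right mult_ac)
    also have "\<dots> \<le> W t powr q * t powr a"
      using W[OF t] by (intro mult_right_mono) auto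
    finally have "g0 t powr q * (\<kappa> powr q * t powr (a+q) + c * t powr b) \<le> g0 t powr q * (W t powr q * t powr a)"
      by (intro mult_left_mono) auto
    moreover have "g0 t powr q * (\<kappa> powr q * t powr (a+q) + c * t powr b)
        = \<kappa> powr q * (g0 t powr q * t powr (a+q)) + c * (g0 t powr q * t powr b)"
      by (simp add: distrib_left mult.left_commute)
    ultimately show ?thesis
      by (simp add: deriv_v[OF t] mult.assoc)
  qed
  have "ennreal (\<kappa> powr q) * I
        + ennreal c * (\<integral>\<^sup>+t\<in>{0<..}. ennreal (\<bar>deriv v t\<bar> powr q * t powr b) \<partial>lborel)
      \<le> (\<integral>\<^sup>+t\<in>{0<..}. ennreal (\<bar>deriv v t\<bar> powr q * W t powr q * t powr a) \<partial>lborel)"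
  proof -
    have "(\<integral>\<^sup>+t\<in>{0<..}. ennreal (\<bar>deriv v t\<bar> powr q * t powr b) \<partial>lborel)
        = (\<integral>\<^sup>+t\<in>{0<..}. ennreal (g0 t powr q * t powr b) \<partial>lborel)"
      by (intro nn_integral_cong) (auto simp: indicator_def deriv_v)
    moreover have "ennreal (\<kappa> powr q) * I + ennreal c * (\<integral>\<^sup>+t\<in>{0<..}. ennreal (g0 t powr q * t powr b) \<partial>lborel)
        \<le> (\<integral>\<^sup>+t\<in>{0<..}. ennreal (\<bar>deriv v t\<bar> powr q * W t powr q * t powr a) \<partial>lborel)"
      unfolding I_def using c pointwise by (intro nn_integral_lincomb_le) auto
    ultimately show ?thesis by simp
  qed
  with add_right_mono[OF hardy] show ?thesis
    by (rule order_trans)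
qed

section \<open>The Laplacian of a test function and its rearrangement\<close>

lemma iter_partial_eq_0_outside_support:
  fixes u :: "'a::euclidean_space \<Rightarrow> real"
  assumes "x \<notin> closure {y. u y \<noteq> 0}"
  shows "iter_partial vs u x = 0"
  using assms
proof (induction vs arbitrary: x)
  case (Cons v vs)
  have "((\<lambda>_. 0) has_derivative (\<lambda>_. 0)) (at x)" by simp
  then have "(iter_partial vs u has_derivative (\<lambda>_. 0)) (at x)"
    by (rule has_derivative_transform_within_open[where s = "- closure {x. u x \<noteq> 0}"])
       (use Cons in auto)
  then show ?case by (simp add: frechet_derivative_at[symmetric])
qed (use closure_subset[of "{x. u x \<noteq> 0}"] in auto)

lemma hyp_laplacian_eq_0_outside_support:
  "x \<notin> closure {y. u y \<noteq> 0} \<Longrightarrow> hyp_laplacian u x = 0"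
  by (simp add: hyp_laplacian_def eucl_laplacian_def iter_partial_eq_0_outside_support
      del: iter_partial.simps)

lemma hyp_laplacian_bounded:
  fixes u :: "'a::euclidean_space \<Rightarrow> real"
  assumes "Cc_infty_hyp u"
  obtains M where "\<And>x. \<bar>hyp_laplacian u x\<bar> \<le> M"
proof -
  let ?K = "closure {x. u x \<noteq> 0}"
  have smooth: "smooth_on hball u" and K: "compact ?K" "?K \<subseteq> hball"
    using assms by (auto simp: Cc_infty_hyp_def)
  have "continuous_on hball (iter_partial vs u)" if "set vs \<subseteq> Basis" for vs
    using smooth that unfolding smooth_on_def by (blast intro: differentiable_imp_continuous_on)
  then have partials: "continuous_on ?K (iter_partial vs u)" if "set vs \<subseteq> Basis" for vs
    using K(2) that by (blast intro: continuous_on_subset)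
  define L where "L x = ((1 - (norm x)\<^sup>2) / 2)\<^sup>2 * (\<Sum>i\<in>Basis. iter_partial [i, i] u x)
       + (real DIM('a) - 2) * ((1 - (norm x)\<^sup>2) / 2) * (\<Sum>i\<in>Basis. (x \<bullet> i) * iter_partial [i] u x)" for x
  have "continuous_on ?K L"
    unfolding L_def by (intro continuous_intros partials) auto
  then obtain M where "M \<ge> 0" and M: "\<And>x. x \<in> ?K \<Longrightarrow> \<bar>L x\<bar> \<le> M"
    using continuous_on_compact_bound[OF K(1)] by (metis real_norm_def)
  have "\<bar>hyp_laplacian u x\<bar> \<le> M" for x
  proof (cases "x \<in> ?K")
    case True
    then have "hyp_laplacian u x = L x" using K(2) by (auto simp: hyp_laplacian_def eucl_laplacian_def L_def)
    then show ?thesis using M[OF True] by simp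
  next
    case False
    then show ?thesis using \<open>M \<ge> 0\<close> hyp_laplacian_eq_0_outside_support[OF False] by simp
  qed
  then show ?thesis by (rule that)
qed

lemma emeasure_hyp_volume_compact_finite:
  fixes K :: "'a::euclidean_space set"
  assumes K: "compact K" "K \<subseteq> hball"
  shows "emeasure hyp_volume K < \<infinity>"
proof -
  define d where "d x = (2 / (1 - (norm x)\<^sup>2)) ^ DIM('a)" for x :: 'a
  have "continuous_on hball d"
    unfolding d_def by (intro continuous_intros) (auto simp: abs_square_eq_1)
  then obtain c where c: "c \<ge> 0" "\<And>x. x \<in> K \<Longrightarrow> norm (d x) \<le> c"
    using continuous_on_compact_bound[OF K(1)] continuous_on_subset[OF _ K(2)] by metis
  have [measurable]: "d \<in> borel_measurable borel"
    unfolding d_def by measurable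
  have [measurable]: "hball \<in> sets (borel :: 'a measure)"
    by simp
  have [measurable]: "K \<in> sets borel"
    using K(1) by (simp add: borel_closed compact_imp_closed)
  have hv: "hyp_volume = density lborel (\<lambda>x. indicator hball x * ennreal (d x))"
    by (simp add: hyp_volume_def d_def)
  have "emeasure hyp_volume K = (\<integral>\<^sup>+x. indicator hball x * ennreal (d x) * indicator K x \<partial>lborel)"
    unfolding hv by (rule emeasure_density) measurable
  also have "\<dots> \<le> (\<integral>\<^sup>+x. ennreal c * indicator K x \<partial>lborel)"
  proof (intro nn_integral_mono)
    fix x
    show "indicator hball x * ennreal (d x) * indicator K x \<le> ennreal c * indicator K x"
      using c(2)[of x] K(2) by (cases "x \<in> K") (auto simp: indicator_def intro: ennreal_leI)
  qed
  also have "\<dots> = ennreal c * emeasure lborel K"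
    using K by (simp add: nn_integral_cmult_indicator)
  also have "\<dots> < \<infinity>"
    using emeasure_bounded_finite[OF compact_imp_bounded[OF K(1)]] by (simp add: ennreal_mult_less_top)
  finally show ?thesis .
qed

locale bounded_finite_support =
  fixes h :: "'a::euclidean_space \<Rightarrow> real" and M V :: real and K :: "'a set"
  assumes bounded: "\<And>x. \<bar>h x\<bar> \<le> M"
    and vanishes: "\<And>x. x \<notin> K \<Longrightarrow> h x = 0"
    and K_sets: "K \<in> sets (hyp_volume :: 'a measure)"
    and K_volume: "emeasure (hyp_volume :: 'a measure) K \<le> ennreal V" and V_nonneg: "V \<ge> 0"
begin

abbreviation thresholds :: "real \<Rightarrow> real set" where
  "thresholds t \<equiv> {s. s > 0 \<and> emeasure (hyp_volume :: 'a measure) {x. \<bar>h x\<bar> > s} > ennreal t}"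

lemma rearr_eq: "rearr h t = (if thresholds t = {} then 0 else Sup (thresholds t))"
  unfolding rearr_def Let_def by (rule refl)

lemma thresholds_le: "s \<in> thresholds t \<Longrightarrow> s \<le> M"
proof (rule ccontr)
  assume s: "s \<in> thresholds t" "\<not> s \<le> M"
  then have "\<bar>h x\<bar> \<le> s" for x using bounded[of x] by linarith
  then have "{x. \<bar>h x\<bar> > s} = {}" by (auto simp: not_less[symmetric])
  then show False using s by simp
qed

lemma bdd_above_thresholds: "bdd_above (thresholds t)"
  using thresholds_le by (rule bdd_aboveI)

lemma M_nonneg: "M \<ge> 0"
  using bounded[of 0] by simp

lemma rearr_nonneg: "rearr h t \<ge> 0"
proof (cases "thresholds t = {}")
  case False
  then obtain s where "s \<in> thresholds t" by blast
  then have "0 < s" "s \<le> Sup (thresholds t)" using bdd_above_thresholds by (auto intro: cSup_upper)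
  then show ?thesis using False by (simp add: rearr_eq)
qed (simp add: rearr_eq)

lemma rearr_le: "rearr h t \<le> M"
  using thresholds_le M_nonneg by (auto simp: rearr_eq intro!: cSup_least)

lemma rearr_eq_0:
  assumes "t \<ge> V"
  shows "rearr h t = 0"
proof -
  have "thresholds t = {}"
  proof (rule ccontr)
    assume "thresholds t \<noteq> {}"
    then obtain s where s: "s > 0" "emeasure (hyp_volume :: 'a measure) {x. \<bar>h x\<bar> > s} > ennreal t"
      by auto
    have "{x. \<bar>h x\<bar> > s} \<subseteq> K" using vanishes s(1) by force
    then have "emeasure (hyp_volume :: 'a measure) {x. \<bar>h x\<bar> > s} \<le> ennreal t"
      using emeasure_mono[OF _ K_sets] K_volume assms by (meson ennreal_leI order_trans)
    then show False using s(2) by simp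
  qed
  then show ?thesis by (simp add: rearr_eq)
qed

lemma rearr_antimono: "t1 \<le> t2 \<Longrightarrow> rearr h t2 \<le> rearr h t1"
proof (cases "thresholds t2 = {}")
  case False
  assume "t1 \<le> t2"
  then have sub: "thresholds t2 \<subseteq> thresholds t1"
    by (auto intro: le_less_trans[rotated] ennreal_leI)
  then show ?thesis
    using False cSup_subset_mono[OF False bdd_above_thresholds sub] by (auto simp: rearr_eq)
next
  case True
  then show ?thesis using rearr_nonneg[of t1] by (simp add: rearr_eq)
qed

lemma integrable_on_rearr: "rearr h integrable_on {a..b}"
proof -
  have "(\<lambda>t. - rearr h t) integrable_on {a..b}"
    by (rule integrable_on_mono_on) (auto simp: mono_on_def rearr_antimono)
  then show ?thesis using integrable_neg by fastforce
qed

lemma integral_rearr_le_linear: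
  assumes "x \<ge> 0"
  shows "integral {0..x} (rearr h) \<le> M * x"
proof -
  have "integral {0..x} (rearr h) \<le> integral {0..x} (\<lambda>_. M)"
    by (rule integral_le[OF integrable_on_rearr]) (auto simp: rearr_le)
  then show ?thesis using assms by (simp add: mult.commute)
qed

lemma integral_rearr_le:
  assumes "s \<ge> 0"
  shows "integral {0..s} (rearr h) \<le> M * V"
proof (cases "s \<le> V")
  case True
  then show ?thesis
    using integral_rearr_le_linear[OF assms] M_nonneg by (meson mult_left_mono order_trans)
next
  case False
  have "integral {0..V} (rearr h) + integral {V..s} (rearr h) = integral {0..s} (rearr h)"
    by (rule Henstock_Kurzweil_Integration.integral_combine)
       (use False V_nonneg integrable_on_rearr in auto)
  moreover have "integral {V..s} (rearr h) = integral {V..s} (\<lambda>_. 0::real)"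
    by (rule integral_cong) (simp add: rearr_eq_0)
  ultimately show ?thesis
    using integral_rearr_le_linear[OF V_nonneg] by simp
qed

lemma rearr2_nonneg: "s \<ge> 0 \<Longrightarrow> rearr2 h s \<ge> 0"
  by (simp add: rearr2_def integral_nonneg[OF integrable_on_rearr] rearr_nonneg)

lemma rearr2_le: "s > 0 \<Longrightarrow> rearr2 h s \<le> M * V / s"
  using integral_rearr_le[of s] by (simp add: rearr2_def divide_right_mono)

lemma isCont_rearr2:
  assumes "s > 0"
  shows "isCont (rearr2 h) s"
proof -
  have "continuous_on {0..s+1} (\<lambda>x. integral {0..x} (rearr h))"
    by (rule indefinite_integral_continuous_1[OF integrable_on_rearr])
  then have "isCont (\<lambda>x. integral {0..x} (rearr h)) s"
    by (rule continuous_on_interior) (use assms in auto)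
  then show ?thesis
    using assms unfolding rearr2_def[abs_def] by (intro continuous_intros) auto
qed

end

lemma rearr2_hyp_laplacian_bounds:
  fixes u :: "'a::euclidean_space \<Rightarrow> real"
  assumes u: "Cc_infty_hyp u"
  obtains B where "\<And>s. s > 0 \<Longrightarrow> 0 \<le> rearr2 (\<lambda>x. - hyp_laplacian u x) s"
    and "\<And>s. s > 0 \<Longrightarrow> rearr2 (\<lambda>x. - hyp_laplacian u x) s \<le> B / s"
    and "\<And>s. s > 0 \<Longrightarrow> isCont (rearr2 (\<lambda>x. - hyp_laplacian u x)) s"
proof -
  define K where "K = closure {x. u x \<noteq> 0}"
  have K: "compact K" "K \<subseteq> hball" using u unfolding Cc_infty_hyp_def K_def by blast+
  obtain M where M: "\<And>x. \<bar>hyp_laplacian u x\<bar> \<le> M" using hyp_laplacian_bounded[OF u] by blast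
  obtain V where V: "emeasure (hyp_volume :: 'a measure) K = ennreal V" "V \<ge> 0"
    using emeasure_hyp_volume_compact_finite[OF K] by (cases "emeasure (hyp_volume :: 'a measure) K") auto
  interpret bounded_finite_support "\<lambda>x. - hyp_laplacian u x" M V K
  proof
    show "K \<in> sets (hyp_volume :: 'a measure)"
      using K(1) by (simp add: hyp_volume_def borel_closed compact_imp_closed)
  qed (use M V hyp_laplacian_eq_0_outside_support in \<open>auto simp: K_def\<close>)
  show ?thesis
    using rearr2_nonneg rearr2_le isCont_rearr2 by (intro that[of "M * V"]) auto
qed

lemma weighted_profile_tail_conditions:
  fixes r w :: "real \<Rightarrow> real" and \<kappa> B :: real
  assumes \<kappa>: "\<kappa> > 0"
    and r_nonneg: "\<And>s. s > 0 \<Longrightarrow> 0 \<le> r s" and r_le: "\<And>s. s > 0 \<Longrightarrow> r s \<le> B / s"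
    and r_cont: "\<And>s. s > 0 \<Longrightarrow> isCont r s"
    and w_ge: "\<And>s. s > 0 \<Longrightarrow> \<kappa> * s \<le> w s" and w_cont: "\<And>s. s > 0 \<Longrightarrow> isCont w s"
  shows "continuous_on {0<..} (\<lambda>s. s * r s / (w s)\<^sup>2)"
    and "\<And>s. s > 0 \<Longrightarrow> 0 \<le> s * r s / (w s)\<^sup>2"
    and "\<And>t. t > 0 \<Longrightarrow> set_integrable lborel {t<..} (\<lambda>s. s * r s / (w s)\<^sup>2)"
proof -
  have w_pos: "w s > 0" if "s > 0" for s
    using w_ge[OF that] \<kappa> that by (meson mult_pos_pos order.strict_trans2)
  show cont: "continuous_on {0<..} (\<lambda>s. s * r s / (w s)\<^sup>2)"
    using w_pos by (intro continuous_at_imp_continuous_on ballI continuous_intros r_cont w_cont)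
      (simp_all add: less_imp_neq[symmetric])
  show nonneg: "0 \<le> s * r s / (w s)\<^sup>2" if "s > 0" for s
    using r_nonneg[OF that] that by simp
  have bound: "\<bar>s * r s / (w s)\<^sup>2\<bar> \<le> (B / \<kappa>\<^sup>2) / s\<^sup>2" if s: "s > 0" for s
  proof -
    have "(\<kappa> * s)\<^sup>2 \<le> (w s)\<^sup>2" using w_ge[OF s] \<kappa> s by (intro power_mono) auto
    moreover have "s * r s \<le> B" using r_le[OF s] s by (simp add: field_simps)
    ultimately have "s * r s / (w s)\<^sup>2 \<le> B / (\<kappa> * s)\<^sup>2"
      using r_nonneg[OF s] s \<kappa> by (intro frac_le) (auto intro: order_trans[of 0 "s * r s"])
    then show ?thesis using nonneg[OF s] by (simp add: power_mult_distrib)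
  qed
  show "set_integrable lborel {t<..} (\<lambda>s. s * r s / (w s)\<^sup>2)" if "t > 0" for t
    by (rule set_integrable_Ioi_if_inverse_square_bound[OF cont bound that])
qed

theorem proposition2p7:
  fixes u :: "'a::euclidean_space \<Rightarrow> real" and p q :: real
  defines "n \<equiv> real DIM('a)"
  defines "\<sigma> \<equiv> sigma_n TYPE('a)"
  defines "F \<equiv> hypF TYPE('a)"
  defines "f \<equiv> (\<lambda>x. - hyp_laplacian u x)"
  defines "w \<equiv> (\<lambda>s. n * \<sigma> * sinh (F s) ^ (DIM('a) - 1))"
  defines "v \<equiv> (\<lambda>t. LINT s:{t<..}|lborel. s * rearr2 f s / (w s)\<^sup>2)"
  assumes "DIM('a) \<ge> 2" and "1 < p" and "p < n" and "q \<ge> 2 * n / (n - 1)"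
    and "Cc_infty_hyp u"
  shows "(\<integral>\<^sup>+ t\<in>{0<..}. ennreal (\<bar>deriv v t\<bar> powr q * (w t) powr q * t powr (q / p - 1)) \<partial>lborel)
         \<ge> ennreal (((n - 1) / p) powr q)
             * (\<integral>\<^sup>+ t\<in>{0<..}. ennreal (\<bar>v t\<bar> powr q * t powr (q / p - 1)) \<partial>lborel)
           + ennreal (n powr q * \<sigma> powr (q / n))
             * (\<integral>\<^sup>+ t\<in>{0<..}. ennreal (\<bar>deriv v t\<bar> powr q * t powr (q * (1/p - 1/n) + q - 1)) \<partial>lborel)
    \<and> (\<integral>\<^sup>+ t\<in>{0<..}. ennreal (\<bar>deriv v t\<bar> powr q * (w t) powr q * t powr (q * (1/p - 1/n) - 1)) \<partial>lborel)
         \<ge> ennreal (((n - 1) * (n - p) / (n * p)) powr q)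
             * (\<integral>\<^sup>+ t\<in>{0<..}. ennreal (\<bar>v t\<bar> powr q * t powr (q * (1/p - 1/n) - 1)) \<partial>lborel)
           + ennreal (n powr q * \<sigma> powr (q / n))
             * (\<integral>\<^sup>+ t\<in>{0<..}. ennreal (\<bar>deriv v t\<bar> powr q * t powr (q * (1/p - 2/n) + q - 1)) \<partial>lborel)"
proof -
  have N: "DIM('a) \<ge> 2" and p: "1 < p" "p < n" using assms by auto
  have n: "n \<ge> 2" using N by (simp add: n_def)
  have "2 \<le> 2 * n / (n - 1)" using n by (simp add: field_simps)
  then have q: "q > 1" using assms(10) by linarith
  have \<sigma>: "\<sigma> > 0" by (simp add: \<sigma>_def sigma_n_def content_ball_pos)
  have w_eq: "w = hyp_sphere_area DIM('a) \<sigma>"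
    by (simp add: fun_eq_iff w_def F_def n_def \<sigma>_def hypF_def hyp_sphere_area_def hyp_ball_radius_def
        sinh_pow_integral_def)
  obtain B where r: "\<And>s. s > 0 \<Longrightarrow> 0 \<le> rearr2 f s" "\<And>s. s > 0 \<Longrightarrow> rearr2 f s \<le> B / s"
    "\<And>s. s > 0 \<Longrightarrow> isCont (rearr2 f) s"
    using rearr2_hyp_laplacian_bounds[OF assms(11)] unfolding f_def by blast
  have w: "\<And>s. s > 0 \<Longrightarrow> (n - 1) * s \<le> w s" "\<And>s. s > 0 \<Longrightarrow> isCont w s"
    using N \<sigma> hyp_sphere_area_ge isCont_hyp_sphere_area unfolding w_eq n_def by auto
  have "n - 1 > 0" using n by simp
  note g = weighted_profile_tail_conditions[OF this r w]
  have iso: "((n - 1) * t) powr q + n powr q * \<sigma> powr (q / n) * t powr (q * (n - 1) / n) \<le> w t powr q"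
    if "t > 0" for t
    using hyp_isoperimetric_powr[OF N \<sigma> _ assms(10)[unfolded n_def]] that unfolding w_eq n_def by simp
  note Hardy = tail_integral_Hardy_with_remainder[OF q _ _ _ g iso]
  show ?thesis
    unfolding v_def by (intro conjI Hardy) (use p n q in \<open>auto simp: field_simps\<close>)
qed

end
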